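(* Let $X$ be a $k$-dimensional complex with vertex set $[n]$ and complete $(k-1)$-skeleton. Fix $d>0$ and let $E=D_{k-1}(X)-dI$. Let $f\ge0$ be such that $\|E\,\delta_{k-2}e_F\|\le f\,\|\delta_{k-2}e_F\|$ for all $F\in X_{k-2}$. Then $\|Eb\|\le k f\|b\|$ for all $b\in B^{k-1}(X)$.
   Context: Standard Euclidean norms. Complexes have linearly ordered vertex sets; $X_i$ is the set of $i$-faces; $[F:G]$ is the oriented incidence number ($(-1)^j$ if $F\setminus G=\{v_j\}$, $F=\{v_0<\dots<v_i\}$; $0$ if $G\not\subseteq F$). Complete $(k-1)$-skeleton: every vertex set of size at most $k$ is a face. $(\delta_{k-2}f)(H)=\sum_{G\in X_{k-2}}[H:G]f(G)$, $B^{k-1}(X)=\operatorname{im}\delta_{k-2}$, $e_F$ is the indicator cochain of $F$. $D_{k-1}(X)$ is the diagonal $X_{k-1}\times X_{k-1}$ matrix whose entry at $F$ is $\deg(F)$, the number of $k$-faces containing $F$. *)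

theory Defs
  imports Complex_Main
begin

text \<open>Faces are finite sets of natural numbers (vertices in [n] = {1..n}, ordered by <).
  An i-face has i+1 vertices; we index face sets by cardinality:
  faces_of X m is the set of (m-1)-faces.\<close>

definition faces_of :: "nat set set \<Rightarrow> nat \<Rightarrow> nat set set" where
  "faces_of X m = {F \<in> X. card F = m}"

definition simplicial_complex :: "nat \<Rightarrow> nat \<Rightarrow> nat set set \<Rightarrow> bool" where
  "simplicial_complex n k X \<longleftrightarrow>
     X \<subseteq> Pow {1..n} \<and>
     (\<forall>F\<in>X. \<forall>G. G \<subseteq> F \<longrightarrow> G \<in> X) \<and>
     (\<forall>F\<in>X. card F \<le> k + 1) \<and>
     (\<exists>F\<in>X. card F = k + 1)"

definition complete_skeleton :: "nat \<Rightarrow> nat \<Rightarrow> nat set set \<Rightarrow> bool" where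
  "complete_skeleton n k X \<longleftrightarrow> (\<forall>F. F \<subseteq> {1..n} \<and> card F \<le> k \<longrightarrow> F \<in> X)"

text \<open>Oriented incidence number [F:G]: (-1)^j if F - G = {v_j}, where j is the position
  of v_j in the increasing enumeration of F (counting from 0); 0 otherwise.\<close>
definition incidence :: "nat set \<Rightarrow> nat set \<Rightarrow> real" where
  "incidence F G =
     (if G \<subseteq> F \<and> card (F - G) = 1
      then (-1) ^ card {u \<in> F. u < the_elem (F - G)} else 0)"

definition coboundary :: "nat set set \<Rightarrow> nat \<Rightarrow> (nat set \<Rightarrow> real) \<Rightarrow> nat set \<Rightarrow> real" where
  "coboundary X k f H = (\<Sum>G\<in>faces_of X (k - 1). incidence H G * f G)"

definition coboundaries :: "nat set set \<Rightarrow> nat \<Rightarrow> (nat set \<Rightarrow> real) set" where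
  "coboundaries X k =
     {b. \<exists>f. \<forall>H\<in>faces_of X k. b H = coboundary X k f H}"

definition indicator_cochain :: "nat set \<Rightarrow> nat set \<Rightarrow> real" where
  "indicator_cochain F = (\<lambda>G. if G = F then 1 else 0)"

definition face_deg :: "nat set set \<Rightarrow> nat \<Rightarrow> nat set \<Rightarrow> nat" where
  "face_deg X k F = card {H \<in> faces_of X (k + 1). F \<subseteq> H}"

definition E_op :: "nat set set \<Rightarrow> nat \<Rightarrow> real \<Rightarrow> (nat set \<Rightarrow> real) \<Rightarrow> nat set \<Rightarrow> real" where
  "E_op X k d b F = (real (face_deg X k F) - d) * b F"

definition cochain_norm :: "nat set set \<Rightarrow> nat \<Rightarrow> (nat set \<Rightarrow> real) \<Rightarrow> real" where
  "cochain_norm X k b = sqrt (\<Sum>F\<in>faces_of X k. (b F)\<^sup>2)"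

end

theory Submission
  imports Defs "HOL-Analysis.Convex"
begin

(* A coboundary b is a cocycle, so on a complete (k-1)-skeleton it is, for every vertex v,
   the coboundary of its cone g_v(G) = [G + v : G] b(G + v) (v not in G).  Cauchy-Schwarz over
   the k facets of F gives b(F)^2 <= k * sum of g_v(F - u)^2 over u in F.  Weighting with
   w(F) = (deg F - d)^2 and exchanging sums, the hypothesis, which says exactly that the
   weights of the cofaces of a (k-2)-face G sum to at most f^2 (n - |G|), yields
   sum_F w(F) b(F)^2 <= k f^2 n |g_v|^2.  Averaging over the n vertices and using
   sum_v |g_v|^2 = k |b|^2 gives |E b|^2 <= k^2 f^2 |b|^2. *)

definition vertex_sign :: "nat set \<Rightarrow> nat \<Rightarrow> real" where
  "vertex_sign F u = (-1) ^ card {x \<in> F. x < u}"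

lemma vertex_sign_mult_self [simp]: "vertex_sign F u * vertex_sign F u = 1"
  by (simp add: vertex_sign_def flip: power_add)

lemma vertex_sign_sq [simp]: "(vertex_sign F u)\<^sup>2 = 1"
  by (simp add: power2_eq_square)

lemma vertex_sign_swap_less:
  assumes "finite S" "a \<in> S" "b \<in> S" "a < b"
  shows "vertex_sign S a * vertex_sign (S - {a}) b = - (vertex_sign S b * vertex_sign (S - {b}) a)"
proof -
  have below_b: "{x \<in> S - {a}. x < b} = {x \<in> S. x < b} - {a}"
    and below_a: "{x \<in> S - {b}. x < a} = {x \<in> S. x < a}"
    using assms by auto
  have "finite {x \<in> S. x < b}" "a \<in> {x \<in> S. x < b}"
    using assms by simp_all
  then have "card {x \<in> S. x < b} = Suc (card {x \<in> S - {a}. x < b})"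
    unfolding below_b by (rule card_Suc_Diff1[symmetric])
  then show ?thesis
    unfolding vertex_sign_def below_a by simp
qed

lemma vertex_sign_swap:
  assumes "finite S" "a \<in> S" "b \<in> S" "a \<noteq> b"
  shows "vertex_sign S a * vertex_sign (S - {a}) b = - (vertex_sign S b * vertex_sign (S - {b}) a)"
  using assms vertex_sign_swap_less[of S a b] vertex_sign_swap_less[of S b a]
  by (cases "a < b") auto

lemma sum_offdiagonal_antisym_eq_0:
  fixes c :: "'a \<Rightarrow> 'a \<Rightarrow> real"
  assumes "finite S" and antisym: "\<And>u w. u \<in> S \<Longrightarrow> w \<in> S \<Longrightarrow> u \<noteq> w \<Longrightarrow> c w u = - c u w"
  shows "(\<Sum>u\<in>S. \<Sum>w\<in>S - {u}. c u w) = 0"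
proof -
  have "(\<Sum>u\<in>S. \<Sum>w\<in>S - {u}. c u w) = (\<Sum>w\<in>S. \<Sum>u\<in>S - {w}. c u w)"
    using sum.swap_restrict[OF assms(1) assms(1), of c "(\<noteq>)"]
    by (simp add: set_diff_eq conj_commute eq_commute)
  also have "\<dots> = - (\<Sum>w\<in>S. \<Sum>u\<in>S - {w}. c w u)"
    by (simp add: antisym sum_negf)
  finally show ?thesis by simp
qed

lemma incidence_remove_vertex:
  assumes "u \<in> F"
  shows "incidence F (F - {u}) = vertex_sign F u"
proof -
  have "F - (F - {u}) = {u}" using assms by auto
  then show ?thesis unfolding incidence_def vertex_sign_def by simp
qed

lemma incidence_insert_vertex:
  assumes "v \<notin> G"
  shows "incidence (insert v G) G = vertex_sign (insert v G) v"
  using incidence_remove_vertex[of v "insert v G"] assms by simp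

lemma incidence_nonzero_imp_facet:
  assumes "finite F" "incidence F G \<noteq> 0"
  obtains u where "u \<in> F" "G = F - {u}"
proof -
  have "G \<subseteq> F" "card (F - G) = 1"
    using assms(2) by (auto simp: incidence_def split: if_splits)
  then obtain u where "F - G = {u}" by (auto simp: card_Suc_eq)
  with \<open>G \<subseteq> F\<close> show ?thesis using that by blast
qed

lemma vertex_sign_cone:
  assumes "finite F" "u \<in> F" "v \<notin> F"
  shows "vertex_sign F u * vertex_sign (insert v (F - {u})) v
           = - (vertex_sign (insert v F) u * vertex_sign (insert v F) v)"
proof -
  define S where "S = insert v F"
  have S_minus: "insert v (F - {u}) = S - {u}" "S - {v} = F"
    using assms by (auto simp: S_def)
  have swap: "vertex_sign S u * vertex_sign (S - {u}) v = - (vertex_sign S v * vertex_sign F u)"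
    using vertex_sign_swap[of S u v] assms S_minus by (auto simp: S_def)
  have "vertex_sign F u * vertex_sign (S - {u}) v
        = vertex_sign F u * (vertex_sign S u * vertex_sign S u) * vertex_sign (S - {u}) v"
    by simp
  also have "\<dots> = vertex_sign F u * vertex_sign S u * (vertex_sign S u * vertex_sign (S - {u}) v)"
    by (simp only: mult_ac)
  also have "\<dots> = - (vertex_sign S u * vertex_sign S v) * (vertex_sign F u * vertex_sign F u)"
    unfolding swap by (simp only: mult_ac mult_minus_right)
  finally show ?thesis by (simp add: S_def S_minus)
qed

definition cone_cochain :: "(nat set \<Rightarrow> real) \<Rightarrow> nat \<Rightarrow> nat set \<Rightarrow> real" where
  "cone_cochain b v G = (if v \<notin> G then vertex_sign (insert v G) v * b (insert v G) else 0)"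

lemma cone_cochain_sq:
  "(cone_cochain b v G)\<^sup>2 = (if v \<notin> G then (b (insert v G))\<^sup>2 else 0)"
  by (simp add: cone_cochain_def power_mult_distrib)

locale complete_skeleton_complex =
  fixes n k :: nat and X :: "nat set set"
  assumes dim_pos: "k \<ge> 1"
    and complex: "simplicial_complex n k X"
    and complete: "complete_skeleton n k X"
begin

lemma faces_of_eq: "m \<le> k \<Longrightarrow> faces_of X m = {F. F \<subseteq> {1..n} \<and> card F = m}"
  using complex complete
  unfolding faces_of_def simplicial_complex_def complete_skeleton_def by auto

lemma face_finite: "F \<in> faces_of X m \<Longrightarrow> finite F"
  using complex unfolding faces_of_def simplicial_complex_def
  by (auto intro: finite_subset)

lemma finite_faces: "finite (faces_of X m)"
proof (rule finite_subset)
  show "faces_of X m \<subseteq> Pow {1..n}"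
    using complex unfolding faces_of_def simplicial_complex_def by auto
qed simp

lemma dim_less_vertices: "k < n"
proof -
  obtain F where "F \<in> X" "card F = k + 1"
    using complex unfolding simplicial_complex_def by auto
  moreover have "F \<subseteq> {1..n}"
    using \<open>F \<in> X\<close> complex unfolding simplicial_complex_def by auto
  ultimately show ?thesis
    using card_mono[of "{1..n}" F] by simp
qed

lemma remove_vertex_in_faces:
  assumes "F \<in> faces_of X k" "u \<in> F"
  shows "F - {u} \<in> faces_of X (k - 1)"
  using assms face_finite[OF assms(1)] by (auto simp: faces_of_eq)

lemma insert_vertex_in_faces:
  assumes "G \<in> faces_of X (k - 1)" "v \<in> {1..n} - G"
  shows "insert v G \<in> faces_of X k"
  using assms face_finite[OF assms(1)] dim_pos by (auto simp: faces_of_eq)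

lemma sum_incidence_facets:
  assumes F: "F \<in> faces_of X k"
  shows "(\<Sum>G\<in>faces_of X (k - 1). incidence F G * \<phi> G)
           = (\<Sum>u\<in>F. vertex_sign F u * \<phi> (F - {u}))"
proof -
  have "(\<Sum>G\<in>faces_of X (k - 1). incidence F G * \<phi> G)
          = (\<Sum>G\<in>(\<lambda>u. F - {u}) ` F. incidence F G * \<phi> G)"
  proof (rule sum.mono_neutral_right)
    show "(\<lambda>u. F - {u}) ` F \<subseteq> faces_of X (k - 1)"
      using remove_vertex_in_faces F by auto
    have "incidence F G = 0" if "G \<notin> (\<lambda>u. F - {u}) ` F" for G
      using incidence_nonzero_imp_facet[OF face_finite[OF F], of G] that by blast
    then show "\<forall>G\<in>faces_of X (k - 1) - (\<lambda>u. F - {u}) ` F. incidence F G * \<phi> G = 0"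
      by simp
  qed (rule finite_faces)
  also have "\<dots> = (\<Sum>u\<in>F. incidence F (F - {u}) * \<phi> (F - {u}))"
    by (rule sum.reindex_cong[OF _ refl refl]) (auto simp: inj_on_def)
  finally show ?thesis by (simp add: incidence_remove_vertex)
qed

lemma sum_incidence_cofaces:
  assumes G: "G \<in> faces_of X (k - 1)"
  shows "(\<Sum>F\<in>faces_of X k. incidence F G * \<phi> F)
           = (\<Sum>v\<in>{1..n} - G. vertex_sign (insert v G) v * \<phi> (insert v G))"
proof -
  have nonzero_coface: "F \<in> (\<lambda>v. insert v G) ` ({1..n} - G)"
    if F: "F \<in> faces_of X k" and "incidence F G \<noteq> 0" for F
  proof -
    obtain u where "u \<in> F" "G = F - {u}"
      using incidence_nonzero_imp_facet[OF face_finite[OF F] \<open>incidence F G \<noteq> 0\<close>] .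
    moreover have "F \<subseteq> {1..n}" using F by (simp add: faces_of_eq)
    ultimately have "F = insert u G" "u \<in> {1..n} - G" by blast+
    then show ?thesis unfolding image_iff by blast
  qed
  have "(\<Sum>F\<in>faces_of X k. incidence F G * \<phi> F)
          = (\<Sum>F\<in>(\<lambda>v. insert v G) ` ({1..n} - G). incidence F G * \<phi> F)"
  proof (rule sum.mono_neutral_right)
    show "(\<lambda>v. insert v G) ` ({1..n} - G) \<subseteq> faces_of X k"
      using insert_vertex_in_faces G by auto
    show "\<forall>F\<in>faces_of X k - (\<lambda>v. insert v G) ` ({1..n} - G). incidence F G * \<phi> F = 0"
      using nonzero_coface by fastforce
  qed (rule finite_faces)
  also have "\<dots> = (\<Sum>v\<in>{1..n} - G. incidence (insert v G) G * \<phi> (insert v G))"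
    by (rule sum.reindex_cong[OF _ refl refl]) (auto simp: inj_on_def)
  finally show ?thesis by (simp add: incidence_insert_vertex)
qed

lemma sum_incidence_sq_facets:
  assumes F: "F \<in> faces_of X k"
  shows "(\<Sum>G\<in>faces_of X (k - 1). (incidence F G)\<^sup>2 * \<psi> G) = (\<Sum>u\<in>F. \<psi> (F - {u}))"
proof -
  have "(\<Sum>G\<in>faces_of X (k - 1). (incidence F G)\<^sup>2 * \<psi> G)
          = (\<Sum>G\<in>faces_of X (k - 1). incidence F G * (incidence F G * \<psi> G))"
    by (simp add: power2_eq_square mult.assoc)
  also have "\<dots> = (\<Sum>u\<in>F. vertex_sign F u * (incidence F (F - {u}) * \<psi> (F - {u})))"
    by (rule sum_incidence_facets[OF F])
  also have "\<dots> = (\<Sum>u\<in>F. \<psi> (F - {u}))"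
    by (intro sum.cong refl) (simp add: incidence_remove_vertex mult.assoc[symmetric])
  finally show ?thesis .
qed

lemma sum_incidence_sq_cofaces:
  assumes G: "G \<in> faces_of X (k - 1)"
  shows "(\<Sum>F\<in>faces_of X k. (incidence F G)\<^sup>2 * \<psi> F) = (\<Sum>v\<in>{1..n} - G. \<psi> (insert v G))"
proof -
  have "(\<Sum>F\<in>faces_of X k. (incidence F G)\<^sup>2 * \<psi> F)
          = (\<Sum>F\<in>faces_of X k. incidence F G * (incidence F G * \<psi> F))"
    by (simp add: power2_eq_square mult.assoc)
  also have "\<dots> = (\<Sum>v\<in>{1..n} - G.
                     vertex_sign (insert v G) v * (incidence (insert v G) G * \<psi> (insert v G)))"
    by (rule sum_incidence_cofaces[OF G])
  also have "\<dots> = (\<Sum>v\<in>{1..n} - G. \<psi> (insert v G))"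
    by (intro sum.cong refl) (simp add: incidence_insert_vertex mult.assoc[symmetric])
  finally show ?thesis .
qed

lemma coboundary_eq_sum_facets:
  "F \<in> faces_of X k \<Longrightarrow> coboundary X k h F = (\<Sum>u\<in>F. vertex_sign F u * h (F - {u}))"
  unfolding coboundary_def by (rule sum_incidence_facets)

lemma coboundaries_cocycle:
  assumes b: "b \<in> coboundaries X k" and S: "S \<subseteq> {1..n}" "card S = k + 1"
  shows "(\<Sum>u\<in>S. vertex_sign S u * b (S - {u})) = 0"
proof -
  obtain h where h: "\<forall>H\<in>faces_of X k. b H = coboundary X k h H"
    using b unfolding coboundaries_def by auto
  have "finite S" using S finite_subset by blast
  then have facet: "S - {u} \<in> faces_of X k" if "u \<in> S" for u
    using that S by (auto simp: faces_of_eq)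
  have "(\<Sum>u\<in>S. vertex_sign S u * b (S - {u}))
          = (\<Sum>u\<in>S. \<Sum>w\<in>S - {u}.
               vertex_sign S u * vertex_sign (S - {u}) w * h (S - {u} - {w}))"
    by (intro sum.cong refl)
      (simp add: h facet coboundary_eq_sum_facets sum_distrib_left mult.assoc)
  also have "\<dots> = 0"
  proof (rule sum_offdiagonal_antisym_eq_0[OF \<open>finite S\<close>])
    fix u w assume "u \<in> S" "w \<in> S" "u \<noteq> w"
    moreover have "S - {w} - {u} = S - {u} - {w}" by auto
    ultimately show "vertex_sign S w * vertex_sign (S - {w}) u * h (S - {w} - {u})
        = - (vertex_sign S u * vertex_sign (S - {u}) w * h (S - {u} - {w}))"
      using vertex_sign_swap[OF \<open>finite S\<close>, of u w] by simp
  qed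
  finally show ?thesis .
qed

lemma coboundary_of_cone_cochain:
  assumes b: "b \<in> coboundaries X k" and v: "v \<in> {1..n}" and F: "F \<in> faces_of X k"
  shows "b F = (\<Sum>u\<in>F. vertex_sign F u * cone_cochain b v (F - {u}))"
proof (cases "v \<in> F")
  case True
  have "(\<Sum>u\<in>F. vertex_sign F u * cone_cochain b v (F - {u}))
          = vertex_sign F v * cone_cochain b v (F - {v})
            + (\<Sum>u\<in>F - {v}. vertex_sign F u * cone_cochain b v (F - {u}))"
    using sum.remove[OF face_finite[OF F] True] by simp
  also have "(\<Sum>u\<in>F - {v}. vertex_sign F u * cone_cochain b v (F - {u})) = 0"
    using True by (intro sum.neutral) (auto simp: cone_cochain_def)
  finally show ?thesis
    using True by (simp add: cone_cochain_def insert_absorb mult.assoc[symmetric])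
next
  case False
  define S where "S = insert v F"
  have "finite F" using face_finite[OF F] .
  have "S \<subseteq> {1..n}" "card S = k + 1"
    using F v False \<open>finite F\<close> by (auto simp: S_def faces_of_eq)
  then have "0 = (\<Sum>u\<in>S. vertex_sign S u * b (S - {u}))"
    using coboundaries_cocycle[OF b] by simp
  also have "\<dots> = vertex_sign S v * b F + (\<Sum>u\<in>F. vertex_sign S u * b (S - {u}))"
    using \<open>finite F\<close> False by (simp add: S_def)
  finally have cocycle: "(\<Sum>u\<in>F. vertex_sign S u * b (S - {u})) = - (vertex_sign S v * b F)"
    by linarith
  have "vertex_sign F u * cone_cochain b v (F - {u})
          = - vertex_sign S v * (vertex_sign S u * b (S - {u}))" if "u \<in> F" for u
  proof -
    have "insert v (F - {u}) = S - {u}" using that False by (auto simp: S_def)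
    then show ?thesis
      using vertex_sign_cone[OF \<open>finite F\<close> that False] False
      by (simp add: cone_cochain_def S_def mult.assoc[symmetric])
  qed
  then have "(\<Sum>u\<in>F. vertex_sign F u * cone_cochain b v (F - {u}))
               = - vertex_sign S v * (\<Sum>u\<in>F. vertex_sign S u * b (S - {u}))"
    by (simp add: sum_distrib_left)
  also have "\<dots> = b F"
    by (simp add: cocycle mult.assoc[symmetric])
  finally show ?thesis ..
qed

lemma sum_cone_cochain_sq:
  "(\<Sum>v\<in>{1..n}. \<Sum>G\<in>faces_of X (k - 1). (cone_cochain b v G)\<^sup>2)
     = real k * (\<Sum>F\<in>faces_of X k. (b F)\<^sup>2)"
proof -
  have "(\<Sum>v\<in>{1..n}. \<Sum>G\<in>faces_of X (k - 1). (cone_cochain b v G)\<^sup>2)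
          = (\<Sum>G\<in>faces_of X (k - 1). \<Sum>v\<in>{1..n}. (cone_cochain b v G)\<^sup>2)"
    by (rule sum.swap)
  also have "\<dots> = (\<Sum>G\<in>faces_of X (k - 1). \<Sum>v\<in>{1..n} - G. (b (insert v G))\<^sup>2)"
  proof (rule sum.cong[OF refl])
    fix G
    have "(\<Sum>v\<in>{1..n}. (cone_cochain b v G)\<^sup>2) = (\<Sum>v\<in>{1..n} - G. (cone_cochain b v G)\<^sup>2)"
      by (rule sum.mono_neutral_right) (auto simp: cone_cochain_sq)
    also have "\<dots> = (\<Sum>v\<in>{1..n} - G. (b (insert v G))\<^sup>2)"
      by (intro sum.cong refl) (simp add: cone_cochain_sq)
    finally show "(\<Sum>v\<in>{1..n}. (cone_cochain b v G)\<^sup>2) = (\<Sum>v\<in>{1..n} - G. (b (insert v G))\<^sup>2)" .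
  qed
  also have "\<dots> = (\<Sum>G\<in>faces_of X (k - 1). \<Sum>F\<in>faces_of X k. (incidence F G)\<^sup>2 * (b F)\<^sup>2)"
    by (intro sum.cong refl) (simp add: sum_incidence_sq_cofaces)
  also have "\<dots> = (\<Sum>F\<in>faces_of X k. \<Sum>G\<in>faces_of X (k - 1). (incidence F G)\<^sup>2 * (b F)\<^sup>2)"
    by (rule sum.swap)
  also have "\<dots> = (\<Sum>F\<in>faces_of X k. real k * (b F)\<^sup>2)"
  proof (rule sum.cong[OF refl])
    fix F assume F: "F \<in> faces_of X k"
    then have "card F = k" by (simp add: faces_of_eq)
    with sum_incidence_sq_facets[OF F, of "\<lambda>_. (b F)\<^sup>2"]
    show "(\<Sum>G\<in>faces_of X (k - 1). (incidence F G)\<^sup>2 * (b F)\<^sup>2) = real k * (b F)\<^sup>2"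
      by simp
  qed
  finally show ?thesis by (simp add: sum_distrib_left)
qed

lemma weighted_norm_le_cone_cochain:
  assumes w: "\<And>F. F \<in> faces_of X k \<Longrightarrow> w F \<ge> 0"
    and C: "\<And>G. G \<in> faces_of X (k - 1) \<Longrightarrow> (\<Sum>v\<in>{1..n} - G. w (insert v G)) \<le> C"
    and b: "b \<in> coboundaries X k" and v: "v \<in> {1..n}"
  shows "(\<Sum>F\<in>faces_of X k. w F * (b F)\<^sup>2)
           \<le> real k * C * (\<Sum>G\<in>faces_of X (k - 1). (cone_cochain b v G)\<^sup>2)"
proof -
  let ?g = "cone_cochain b v"
  have cauchy_schwarz: "(b F)\<^sup>2 \<le> real k * (\<Sum>u\<in>F. (?g (F - {u}))\<^sup>2)"
    if F: "F \<in> faces_of X k" for F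
  proof -
    have "(b F)\<^sup>2 = (\<Sum>u\<in>F. vertex_sign F u * ?g (F - {u}))\<^sup>2"
      by (simp add: coboundary_of_cone_cochain[OF b v F])
    also have "\<dots> \<le> (\<Sum>u\<in>F. (vertex_sign F u * ?g (F - {u}))\<^sup>2) * card F"
      by (rule sum_squared_le_sum_of_squares)
    also have "\<dots> = real k * (\<Sum>u\<in>F. (?g (F - {u}))\<^sup>2)"
      using F by (simp add: faces_of_eq power_mult_distrib)
    finally show ?thesis .
  qed
  have "(\<Sum>F\<in>faces_of X k. w F * (b F)\<^sup>2)
          \<le> (\<Sum>F\<in>faces_of X k. w F * (real k * (\<Sum>u\<in>F. (?g (F - {u}))\<^sup>2)))"
    by (intro sum_mono mult_left_mono cauchy_schwarz w)
  also have "\<dots> = (\<Sum>F\<in>faces_of X k. real k * (\<Sum>G\<in>faces_of X (k - 1).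
                               (incidence F G)\<^sup>2 * (w F * (?g G)\<^sup>2)))"
  proof (rule sum.cong[OF refl])
    fix F assume F: "F \<in> faces_of X k"
    show "w F * (real k * (\<Sum>u\<in>F. (?g (F - {u}))\<^sup>2))
            = real k * (\<Sum>G\<in>faces_of X (k - 1). (incidence F G)\<^sup>2 * (w F * (?g G)\<^sup>2))"
      unfolding sum_incidence_sq_facets[OF F] by (simp add: sum_distrib_left mult_ac)
  qed
  also have "\<dots> = real k * (\<Sum>F\<in>faces_of X k. \<Sum>G\<in>faces_of X (k - 1).
                               (incidence F G)\<^sup>2 * (w F * (?g G)\<^sup>2))"
    by (rule sum_distrib_left[symmetric])
  also have "\<dots> = real k * (\<Sum>G\<in>faces_of X (k - 1).
                     (?g G)\<^sup>2 * (\<Sum>F\<in>faces_of X k. (incidence F G)\<^sup>2 * w F))"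
    by (subst sum.swap) (simp add: sum_distrib_left mult_ac)
  also have "\<dots> \<le> real k * (\<Sum>G\<in>faces_of X (k - 1). (?g G)\<^sup>2 * C)"
  proof (rule mult_left_mono[OF sum_mono])
    fix G assume G: "G \<in> faces_of X (k - 1)"
    have "(\<Sum>F\<in>faces_of X k. (incidence F G)\<^sup>2 * w F) \<le> C"
      unfolding sum_incidence_sq_cofaces[OF G] by (rule C[OF G])
    then show "(?g G)\<^sup>2 * (\<Sum>F\<in>faces_of X k. (incidence F G)\<^sup>2 * w F) \<le> (?g G)\<^sup>2 * C"
      by (simp add: mult_left_mono)
  qed simp
  finally show ?thesis by (simp add: sum_distrib_left sum_distrib_right mult_ac)
qed

lemma weighted_norm_coboundary_le:
  assumes w: "\<And>F. F \<in> faces_of X k \<Longrightarrow> w F \<ge> 0"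
    and C: "\<And>G. G \<in> faces_of X (k - 1) \<Longrightarrow> (\<Sum>v\<in>{1..n} - G. w (insert v G)) \<le> C"
    and b: "b \<in> coboundaries X k"
  shows "real n * (\<Sum>F\<in>faces_of X k. w F * (b F)\<^sup>2)
           \<le> (real k)\<^sup>2 * C * (\<Sum>F\<in>faces_of X k. (b F)\<^sup>2)"
proof -
  have "real n * (\<Sum>F\<in>faces_of X k. w F * (b F)\<^sup>2)
          = (\<Sum>v\<in>{1..n}. \<Sum>F\<in>faces_of X k. w F * (b F)\<^sup>2)"
    by simp
  also have "\<dots> \<le> (\<Sum>v\<in>{1..n}. real k * C * (\<Sum>G\<in>faces_of X (k - 1). (cone_cochain b v G)\<^sup>2))"
    by (intro sum_mono weighted_norm_le_cone_cochain[OF w C b]) auto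
  also have "\<dots> = real k * C * (\<Sum>v\<in>{1..n}. \<Sum>G\<in>faces_of X (k - 1). (cone_cochain b v G)\<^sup>2)"
    by (rule sum_distrib_left[symmetric])
  also have "\<dots> = real k * C * (real k * (\<Sum>F\<in>faces_of X k. (b F)\<^sup>2))"
    by (simp only: sum_cone_cochain_sq)
  finally show ?thesis by (simp add: power2_eq_square mult_ac)
qed

lemma coboundary_indicator_cochain:
  "G \<in> faces_of X (k - 1) \<Longrightarrow> coboundary X k (indicator_cochain G) F = incidence F G"
  by (simp add: coboundary_def indicator_cochain_def finite_faces if_distrib[of "(*) _"] cong: if_cong)

lemma norm_sq_scaled_coboundary_indicator:
  assumes G: "G \<in> faces_of X (k - 1)"
  shows "(cochain_norm X k (\<lambda>F. a F * coboundary X k (indicator_cochain G) F))\<^sup>2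
           = (\<Sum>v\<in>{1..n} - G. (a (insert v G))\<^sup>2)"
proof -
  have "(cochain_norm X k (\<lambda>F. a F * coboundary X k (indicator_cochain G) F))\<^sup>2
          = (\<Sum>F\<in>faces_of X k. (incidence F G)\<^sup>2 * (a F)\<^sup>2)"
    unfolding cochain_norm_def coboundary_indicator_cochain[OF G]
    by (simp add: sum_nonneg power_mult_distrib mult.commute)
  also have "\<dots> = (\<Sum>v\<in>{1..n} - G. (a (insert v G))\<^sup>2)"
    by (rule sum_incidence_sq_cofaces[OF G])
  finally show ?thesis .
qed

lemma coface_degree_bound:
  assumes G: "G \<in> faces_of X (k - 1)"
    and spectral: "cochain_norm X k (E_op X k d (coboundary X k (indicator_cochain G)))
                     \<le> f * cochain_norm X k (coboundary X k (indicator_cochain G))"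
  shows "(\<Sum>v\<in>{1..n} - G. (real (face_deg X k (insert v G)) - d)\<^sup>2) \<le> f\<^sup>2 * real n"
proof -
  have E_op_eq: "E_op X k d c = (\<lambda>F. (real (face_deg X k F) - d) * c F)" for c
    by (simp add: fun_eq_iff E_op_def)
  have "(\<Sum>v\<in>{1..n} - G. (real (face_deg X k (insert v G)) - d)\<^sup>2)
          = (cochain_norm X k (E_op X k d (coboundary X k (indicator_cochain G))))\<^sup>2"
    by (simp add: E_op_eq norm_sq_scaled_coboundary_indicator[OF G])
  also have "\<dots> \<le> (f * cochain_norm X k (coboundary X k (indicator_cochain G)))\<^sup>2"
    using spectral by (intro power_mono) (auto simp: cochain_norm_def intro: sum_nonneg)
  also have "\<dots> = f\<^sup>2 * real (card ({1..n} - G))"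
    using norm_sq_scaled_coboundary_indicator[OF G, of "\<lambda>_. 1"] by (simp add: power_mult_distrib)
  also have "\<dots> \<le> f\<^sup>2 * real n"
    using card_mono[of "{1..n}" "{1..n} - G"] by (simp add: mult_left_mono)
  finally show ?thesis .
qed

end

theorem proposition3p6:
  fixes n k :: nat and X :: "nat set set" and d f :: real
  assumes "k \<ge> 1"
    and "simplicial_complex n k X"
    and "complete_skeleton n k X"
    and "d > 0"
    and "f \<ge> 0"
    and "\<forall>F\<in>faces_of X (k - 1).
           cochain_norm X k (E_op X k d (coboundary X k (indicator_cochain F)))
             \<le> f * cochain_norm X k (coboundary X k (indicator_cochain F))"
    and "b \<in> coboundaries X k"
  shows "cochain_norm X k (E_op X k d b) \<le> real k * f * cochain_norm X k b"
proof -
  interpret complete_skeleton_complex n k X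
    using assms(1-3) by unfold_locales
  define w where "w F = (real (face_deg X k F) - d)\<^sup>2" for F
  have "real n * (\<Sum>F\<in>faces_of X k. w F * (b F)\<^sup>2)
          \<le> (real k)\<^sup>2 * (f\<^sup>2 * real n) * (\<Sum>F\<in>faces_of X k. (b F)\<^sup>2)"
    using weighted_norm_coboundary_le[of w "f\<^sup>2 * real n", OF _ _ assms(7)]
      coface_degree_bound assms(6) by (simp add: w_def)
  also have "\<dots> = real n * ((real k * f)\<^sup>2 * (\<Sum>F\<in>faces_of X k. (b F)\<^sup>2))"
    by (simp only: power_mult_distrib mult_ac)
  finally have "(\<Sum>F\<in>faces_of X k. w F * (b F)\<^sup>2)
                  \<le> (real k * f)\<^sup>2 * (\<Sum>F\<in>faces_of X k. (b F)\<^sup>2)"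
    using dim_less_vertices by (simp only: mult_le_cancel_left_pos of_nat_0_less_iff)
  then have "sqrt (\<Sum>F\<in>faces_of X k. w F * (b F)\<^sup>2)
               \<le> sqrt ((real k * f)\<^sup>2 * (\<Sum>F\<in>faces_of X k. (b F)\<^sup>2))"
    by (rule real_sqrt_le_mono)
  also have "\<dots> = real k * f * cochain_norm X k b"
    using assms(5) by (simp add: cochain_norm_def real_sqrt_mult)
  finally show ?thesis
    by (simp add: cochain_norm_def E_op_def w_def power_mult_distrib)
qed

end
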